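(* Let $f(z)=\sum_{k\ge0}a_kz^k$ be an entire transcendental function, let $a_{n_0}$ be its first nonzero coefficient, let $M(r)=\max_{\theta}|f(re^{i\theta})|$, and for $n>n_0$ let $r_\diamond(n)=\operatorname{argmin}_{r>0}r^{-n}M(r)$ (the unique minimizer). Then $r_\diamond(n)\le r_\diamond(n+1)$ for $n>n_0$, and $\lim_{n\to\infty}r_\diamond(n)=\infty$. *)

theory Defs
  imports "HOL-Complex_Analysis.Complex_Analysis"
begin

definition max_modulus :: "(complex \<Rightarrow> complex) \<Rightarrow> real \<Rightarrow> real" where
  "max_modulus f r = (SUP \<theta>\<in>UNIV. cmod (f (of_real r * exp (\<i> * of_real \<theta>))))"

definition r_diamond :: "(complex \<Rightarrow> complex) \<Rightarrow> nat \<Rightarrow> real" where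
  "r_diamond f n = (THE r. r > 0 \<and>
      (\<forall>s>0. max_modulus f r / r ^ n \<le> max_modulus f s / s ^ n))"

end

theory Submission
  imports Defs
begin

text \<open>
  Cauchy's estimate gives \<open>M(r) \<ge> |a k| r^k\<close> for every \<open>k\<close>. For \<open>n > n\<^sub>0\<close> the
  nonzero coefficient \<open>a n\<^sub>0\<close> and a nonzero coefficient of index above \<open>n\<close> (which
  exists as \<open>f\<close> is not a polynomial) make the continuous function \<open>M(r) / r^n\<close> blow
  up at \<open>0\<close> and at \<open>\<infinity>\<close>, so it has a minimizer. Two minimizers \<open>r\<^sub>1 < r\<^sub>2\<close> would
  give \<open>|f(z) / z^n|\<close> an interior maximum on the annulus \<open>r\<^sub>1 \<le> |z| \<le> r\<^sub>2\<close>, forcing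
  \<open>f = c z^n\<close>. Adding the minimality conditions for \<open>n\<close> and \<open>n + 1\<close> gives monotonicity.
  Finally, if all minimizers \<open>r\<^sub>n\<close> stayed below \<open>Z\<close>, minimality against \<open>2 Z\<close> would give
  \<open>M(r\<^sub>n) \<le> M(2 Z) 2^-n \<rightarrow> 0\<close>, whereas by monotonicity \<open>M(r\<^sub>n) \<ge> |a n\<^sub>0| c^n\<^sub>0 > 0\<close>
  with \<open>c\<close> the first of the minimizers.
\<close>

definition is_radius_minimizer :: "(real \<Rightarrow> real) \<Rightarrow> nat \<Rightarrow> real \<Rightarrow> bool" where
  "is_radius_minimizer M n r \<longleftrightarrow> r > 0 \<and> (\<forall>s>0. M r / r ^ n \<le> M s / s ^ n)"

lemma r_diamond_eq_The: "r_diamond f n = (THE r. is_radius_minimizer (max_modulus f) n r)"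
  unfolding r_diamond_def is_radius_minimizer_def ..

lemma less_div_power_if_low_order_bound:
  fixes r y :: real
  assumes "A * r ^ j \<le> y" "A > 0" "j < n" "0 < r" "r \<le> 1" "r * C < A"
  shows "C < y / r ^ n"
proof -
  have "A * r ^ j / r ^ n = A / r ^ (n - j)"
    using assms by (simp add: power_diff)
  also have "r ^ (n - j) \<le> r ^ 1"
    using assms by (intro power_decreasing) auto
  then have "A / r \<le> A / r ^ (n - j)" using assms by (intro divide_left_mono) auto
  moreover have "C < A / r" using assms by (simp add: field_simps)
  moreover have "A * r ^ j / r ^ n \<le> y / r ^ n" using assms by (simp add: divide_right_mono)
  ultimately show ?thesis by linarith
qed

lemma less_div_power_if_high_order_bound:
  fixes r y :: real
  assumes "B * r ^ k \<le> y" "B > 0" "n < k" "1 \<le> r" "C < B * r"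
  shows "C < y / r ^ n"
proof -
  have "B * r ^ k / r ^ n = B * r ^ (k - n)"
    using assms by (simp add: power_diff)
  moreover have "r ^ 1 \<le> r ^ (k - n)"
    using assms by (intro power_increasing) auto
  then have "B * r \<le> B * r ^ (k - n)" using assms by simp
  moreover have "B * r ^ k / r ^ n \<le> y / r ^ n" using assms by (simp add: divide_right_mono)
  ultimately show ?thesis using assms by linarith
qed

lemma radius_minimizer_exists:
  fixes M :: "real \<Rightarrow> real"
  assumes cont: "continuous_on {0<..} M"
    and low: "\<And>r. r > 0 \<Longrightarrow> A * r ^ j \<le> M r" and "A > 0" "j < n"
    and high: "\<And>r. r > 0 \<Longrightarrow> B * r ^ k \<le> M r" and "B > 0" "n < k"
  shows "\<exists>r. is_radius_minimizer M n r"
proof -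
  define \<phi> where "\<phi> = (\<lambda>r. M r / r ^ n)"
  have "M 1 > 0" using low[of 1] \<open>A > 0\<close> by simp
  define \<alpha> where "\<alpha> = min 1 (A / M 1)"
  define \<beta> where "\<beta> = max 1 (M 1 / B)"
  have \<alpha>: "0 < \<alpha>" "\<alpha> \<le> 1" and "1 \<le> \<beta>"
    using \<open>A > 0\<close> \<open>M 1 > 0\<close> by (auto simp: \<alpha>_def \<beta>_def)
  have outside: "\<phi> 1 < \<phi> r" if "0 < r" "r \<notin> {\<alpha>..\<beta>}" for r
  proof (cases "r < \<alpha>")
    case True
    then have "r * M 1 < A" using \<open>M 1 > 0\<close> by (simp add: \<alpha>_def field_simps)
    then show ?thesis
      using less_div_power_if_low_order_bound[OF low] True that \<alpha> \<open>A > 0\<close> \<open>j < n\<close>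
      by (simp add: \<phi>_def)
  next
    case False
    then have "\<beta> < r" "1 \<le> r" using that \<open>1 \<le> \<beta>\<close> by auto
    then have "M 1 < B * r" using \<open>B > 0\<close> by (simp add: \<beta>_def field_simps)
    then show ?thesis
      using less_div_power_if_high_order_bound[OF high] \<open>1 \<le> r\<close> that \<open>B > 0\<close> \<open>n < k\<close>
      by (simp add: \<phi>_def)
  qed
  have "continuous_on {\<alpha>..\<beta>} \<phi>" unfolding \<phi>_def
    by (intro continuous_intros continuous_on_subset[OF cont]) (use \<alpha> in auto)
  then obtain r where r: "r \<in> {\<alpha>..\<beta>}" "\<And>y. y \<in> {\<alpha>..\<beta>} \<Longrightarrow> \<phi> r \<le> \<phi> y"
    using continuous_attains_inf[of "{\<alpha>..\<beta>}" \<phi>] \<alpha> \<open>1 \<le> \<beta>\<close> by auto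
  have "\<phi> r \<le> \<phi> 1" using r(2)[of 1] \<alpha> \<open>1 \<le> \<beta>\<close> by auto
  then have "\<phi> r \<le> \<phi> s" if "s > 0" for s
    using r(2)[of s] outside[of s] that by force
  moreover have "r > 0" using r \<alpha> by auto
  ultimately show ?thesis unfolding is_radius_minimizer_def \<phi>_def by blast
qed

lemma radius_minimizer_Suc_mono:
  assumes r: "is_radius_minimizer M n r" and s: "is_radius_minimizer M (Suc n) s"
    and "M s > 0"
  shows "r \<le> s"
proof -
  have "r > 0" "s > 0" using r s by (auto simp: is_radius_minimizer_def)
  have "M r / r ^ n \<le> M s / s ^ n" "M s / s ^ Suc n \<le> M r / r ^ Suc n"
    using r s \<open>r > 0\<close> \<open>s > 0\<close> by (auto simp: is_radius_minimizer_def)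
  then have min_n: "M r * s ^ n \<le> M s * r ^ n"
    and min_Suc: "M s * r ^ n * r \<le> M r * s ^ n * s"
    using \<open>r > 0\<close> \<open>s > 0\<close> by (simp_all add: field_simps)
  note min_Suc
  also have "M r * s ^ n * s \<le> M s * r ^ n * s"
    using min_n \<open>s > 0\<close> by (simp add: mult_right_mono)
  finally show "r \<le> s" using \<open>M s > 0\<close> \<open>r > 0\<close> by (simp add: mult_le_cancel_left_pos)
qed

lemma radius_minimizers_mono:
  assumes pos: "\<And>r. r > 0 \<Longrightarrow> M r > 0"
    and min: "\<And>n. n \<ge> N \<Longrightarrow> is_radius_minimizer M n (\<rho> n)"
    and "N \<le> m" "m \<le> n"
  shows "\<rho> m \<le> \<rho> n"
  using \<open>m \<le> n\<close> \<open>N \<le> m\<close>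
proof (induction n rule: dec_induct)
  case (step k)
  then have k: "is_radius_minimizer M k (\<rho> k)"
    and Suc_k: "is_radius_minimizer M (Suc k) (\<rho> (Suc k))"
    using min by auto
  then have "M (\<rho> (Suc k)) > 0" using pos by (simp add: is_radius_minimizer_def)
  with k Suc_k have "\<rho> k \<le> \<rho> (Suc k)" by (rule radius_minimizer_Suc_mono)
  with step show ?case by simp
qed simp

lemma radius_minimizer_le_div_two_power:
  assumes min: "is_radius_minimizer M n r" and "2 * r \<le> R" "M R \<ge> 0"
  shows "M r \<le> M R / 2 ^ n"
proof -
  have "r > 0" "R > 0" using min \<open>2 * r \<le> R\<close> by (auto simp: is_radius_minimizer_def)
  then have "M r / r ^ n \<le> M R / R ^ n" using min by (simp add: is_radius_minimizer_def)
  then have "M r \<le> M R * (r / R) ^ n"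
    using \<open>r > 0\<close> \<open>R > 0\<close> by (simp add: field_simps power_divide)
  also have "\<dots> \<le> M R * (1 / 2) ^ n"
    using assms \<open>r > 0\<close> \<open>R > 0\<close> by (intro mult_left_mono power_mono) (auto simp: field_simps)
  finally show ?thesis by (simp add: power_divide)
qed

lemma radius_minimizers_tendsto_infinity:
  fixes M :: "real \<Rightarrow> real" and \<rho> :: "nat \<Rightarrow> real"
  assumes low: "\<And>r. r > 0 \<Longrightarrow> K * r ^ j \<le> M r" and "K > 0"
    and min: "\<And>n. n \<ge> N \<Longrightarrow> is_radius_minimizer M n (\<rho> n)"
  shows "filterlim \<rho> at_top sequentially"
proof -
  have Mpos: "M r > 0" if "r > 0" for r
    using less_le_trans[OF mult_pos_pos[OF \<open>K > 0\<close> zero_less_power[where n = j, OF that]]]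
      low[OF that] .
  have \<rho>_pos: "\<rho> n > 0" if "n \<ge> N" for n
    using min[OF that] by (simp add: is_radius_minimizer_def)
  note mono = radius_minimizers_mono[OF Mpos min]
  define c where "c = \<rho> N"
  have c: "c > 0" using \<rho>_pos by (simp add: c_def)
  have unbounded: "\<exists>n\<ge>N. Z \<le> \<rho> n" for Z
  proof (rule ccontr)
    assume "\<not> (\<exists>n\<ge>N. Z \<le> \<rho> n)"
    then have below: "\<And>n. n \<ge> N \<Longrightarrow> \<rho> n < Z" by force
    define L where "L = K * c ^ j"
    have L: "L > 0" using \<open>K > 0\<close> c by (simp add: L_def)
    obtain m where m: "M (2 * Z) / L < 2 ^ m" using real_arch_pow[of 2] by auto
    define n where "n = N + m"
    define r where "r = \<rho> n"
    have r: "r > 0" "c \<le> r" "r < Z"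
      using \<rho>_pos[of n] mono[where m = N and n = n] below[of n] by (auto simp: r_def c_def n_def)
    have "M (2 * Z) > 0" using Mpos r by simp
    have "M r \<le> M (2 * Z) / 2 ^ n"
      using radius_minimizer_le_div_two_power[OF min[of n]] r \<open>M (2 * Z) > 0\<close>
      by (simp add: r_def n_def)
    also have "\<dots> \<le> M (2 * Z) / 2 ^ m"
      using \<open>M (2 * Z) > 0\<close> by (intro divide_left_mono power_increasing) (auto simp: n_def)
    also have "\<dots> < L"
      using m L by (simp add: field_simps)
    also have "L \<le> K * r ^ j"
      unfolding L_def using r c \<open>K > 0\<close> by (intro mult_left_mono power_mono) auto
    finally show False using low[OF r(1)] by linarith
  qed
  show ?thesis
    unfolding filterlim_at_top eventually_sequentially
  proof
    fix Z
    obtain n where "n \<ge> N" "Z \<le> \<rho> n" using unbounded by blast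
    then show "\<exists>n. \<forall>m\<ge>n. Z \<le> \<rho> m" using mono[where m = n] by (intro exI[of _ n]) force
  qed
qed

lemma max_modulus_eq_Sup_sphere:
  assumes "r \<ge> 0"
  shows "max_modulus f r = Sup ((\<lambda>z. cmod (f z)) ` sphere 0 r)"
proof -
  let ?h = "\<lambda>\<theta>::real. of_real r * exp (\<i> * of_real \<theta>)"
  have "range ?h = sphere 0 r"
  proof
    show "range ?h \<subseteq> sphere 0 r" using assms by (auto simp: norm_mult)
    show "sphere 0 r \<subseteq> range ?h"
    proof
      fix z :: complex assume z: "z \<in> sphere 0 r"
      show "z \<in> range ?h"
      proof (cases "z = 0")
        case True
        then show ?thesis using z by (auto intro: range_eqI[of _ _ 0])
      next
        case False
        then have "z = ?h (Arg z)" using z Arg_eq[OF False] by simp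
        then show ?thesis by blast
      qed
    qed
  qed
  moreover have "(\<lambda>\<theta>. cmod (f (?h \<theta>))) ` UNIV = (\<lambda>z. cmod (f z)) ` range ?h"
    by (simp add: image_image)
  ultimately show ?thesis unfolding max_modulus_def by simp
qed

lemma compact_norm_image_sphere:
  fixes f :: "complex \<Rightarrow> complex"
  assumes "continuous_on UNIV f"
  shows "compact ((\<lambda>z. cmod (f z)) ` sphere 0 r)"
  by (intro compact_continuous_image continuous_on_norm continuous_on_subset[OF assms])
     (simp_all add: compact_sphere)

lemma norm_le_max_modulus:
  fixes f :: "complex \<Rightarrow> complex"
  assumes "continuous_on UNIV f" "norm z = r"
  shows "cmod (f z) \<le> max_modulus f r"
proof -
  have "r \<ge> 0" using assms(2) by auto
  have "bdd_above ((\<lambda>z. cmod (f z)) ` sphere 0 r)"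
    using compact_norm_image_sphere[OF assms(1)] by (meson bounded_imp_bdd_above compact_imp_bounded)
  then show ?thesis unfolding max_modulus_eq_Sup_sphere[OF \<open>r \<ge> 0\<close>]
    by (rule cSup_upper[rotated]) (use assms in auto)
qed

lemma max_modulus_attained:
  fixes f :: "complex \<Rightarrow> complex"
  assumes "continuous_on UNIV f" "r \<ge> 0"
  obtains z where "norm z = r" "cmod (f z) = max_modulus f r"
proof -
  have "of_real r \<in> sphere (0::complex) r" using assms(2) by simp
  then have ne: "(\<lambda>z. cmod (f z)) ` sphere 0 r \<noteq> {}" by blast
  obtain z where z: "z \<in> sphere 0 r" "\<And>w. w \<in> sphere 0 r \<Longrightarrow> cmod (f w) \<le> cmod (f z)"
    using compact_attains_sup[OF compact_norm_image_sphere[OF assms(1)] ne] by blast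
  have "Sup ((\<lambda>z. cmod (f z)) ` sphere 0 r) = cmod (f z)"
    using z by (intro cSup_eq_maximum) auto
  then show ?thesis using that z max_modulus_eq_Sup_sphere[OF assms(2)] by auto
qed

lemma max_modulus_le_close_radius:
  fixes f :: "complex \<Rightarrow> complex"
  assumes "continuous_on UNIV f"
    and ucont: "\<And>x y. norm x \<le> R \<Longrightarrow> norm y \<le> R \<Longrightarrow> dist x y < d \<Longrightarrow> dist (f x) (f y) < e"
    and "0 < r" "r \<le> R" "0 < s" "s \<le> R" "\<bar>s - r\<bar> < d"
  shows "max_modulus f r \<le> max_modulus f s + e"
proof -
  obtain z where z: "norm z = r" "cmod (f z) = max_modulus f r"
    using max_modulus_attained[OF assms(1), of r] assms by auto
  define z' where "z' = z * of_real (s / r)"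
  have z': "norm z' = s" using z assms by (simp add: z'_def norm_mult del: of_real_divide)
  have "z - z' = z * of_real (1 - s / r)" by (simp add: z'_def algebra_simps)
  then have "dist z z' = r * \<bar>1 - s / r\<bar>"
    using z by (simp add: dist_norm norm_mult del: of_real_diff of_real_divide)
  also have "\<dots> = \<bar>r * (1 - s / r)\<bar>" using \<open>0 < r\<close> by (simp add: abs_mult)
  also have "r * (1 - s / r) = r - s" using \<open>0 < r\<close> by (simp add: field_simps)
  finally have "dist (f z) (f z') < e"
    using ucont[of z z'] z z' assms by (simp add: abs_minus_commute)
  then have "cmod (f z) \<le> cmod (f z') + e"
    using norm_triangle_ineq2[of "f z" "f z'"] by (simp add: dist_norm)
  then show ?thesis using norm_le_max_modulus[OF assms(1) z'] z by simp
qed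

lemma continuous_on_max_modulus:
  fixes f :: "complex \<Rightarrow> complex"
  assumes "continuous_on UNIV f"
  shows "continuous_on {0<..} (max_modulus f)"
  unfolding continuous_on_iff
proof (intro ballI allI impI)
  fix r e :: real assume "r \<in> {0<..}" "e > 0"
  have "uniformly_continuous_on (cball 0 (r + 1)) f"
    by (intro compact_uniformly_continuous continuous_on_subset[OF assms]) auto
  then obtain d where "d > 0" and d: "\<And>x y. x \<in> cball 0 (r + 1) \<Longrightarrow> y \<in> cball 0 (r + 1) \<Longrightarrow>
      dist y x < d \<Longrightarrow> dist (f y) (f x) < e / 2"
    unfolding uniformly_continuous_on_def using \<open>e > 0\<close> by (metis half_gt_zero)
  have ucont: "dist (f x) (f y) < e / 2"
    if "norm x \<le> r + 1" "norm y \<le> r + 1" "dist x y < d" for x y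
    using d[of y x] that by (simp add: dist_commute)
  show "\<exists>d>0. \<forall>s\<in>{0<..}. dist s r < d \<longrightarrow> dist (max_modulus f s) (max_modulus f r) < e"
  proof (intro exI[of _ "min d 1"] conjI ballI impI)
    fix s assume "s \<in> {0<..}" "dist s r < min d 1"
    then have "max_modulus f s \<le> max_modulus f r + e / 2"
      and "max_modulus f r \<le> max_modulus f s + e / 2"
      using max_modulus_le_close_radius[OF assms ucont] \<open>r \<in> {0<..}\<close>
      by (auto simp: dist_real_def abs_minus_commute)
    then show "dist (max_modulus f s) (max_modulus f r) < e"
      using \<open>e > 0\<close> by (simp add: dist_real_def)
  qed (use \<open>d > 0\<close> in auto)
qed

lemma power_series_entire:
  fixes f :: "complex \<Rightarrow> complex" and a :: "nat \<Rightarrow> complex"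
  assumes series: "\<And>z. (\<lambda>k. a k * z ^ k) sums f z"
  shows "f holomorphic_on UNIV" and "a k = (deriv ^^ k) f 0 / fact k"
proof -
  have rad: "fps_conv_radius (Abs_fps a) = \<infinity>"
    unfolding fps_conv_radius_def using series
    by (intro conv_radius_inftyI'') (auto simp: sums_iff)
  have eval: "eval_fps (Abs_fps a) = f"
    using series by (auto simp: eval_fps_def fun_eq_iff sums_iff)
  show "f holomorphic_on UNIV"
    using holomorphic_on_eval_fps[of UNIV "Abs_fps a"] rad by (simp add: eval)
  have "f has_fps_expansion Abs_fps a"
    using eval_fps_has_fps_expansion[of "Abs_fps a"] rad by (simp add: eval)
  from fps_nth_fps_expansion[OF this] show "a k = (deriv ^^ k) f 0 / fact k" by simp
qed

lemma norm_coeff_mult_power_le_max_modulus: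
  fixes f :: "complex \<Rightarrow> complex" and a :: "nat \<Rightarrow> complex"
  assumes series: "\<And>z. (\<lambda>k. a k * z ^ k) sums f z" and "r > 0"
  shows "norm (a k) * r ^ k \<le> max_modulus f r"
proof -
  have hol: "f holomorphic_on UNIV" using power_series_entire[OF series] by simp
  then have cont: "continuous_on UNIV f" by (rule holomorphic_on_imp_continuous_on)
  have "norm ((deriv ^^ k) f 0) \<le> fact k * max_modulus f r / r ^ k"
  proof (rule Cauchy_inequality)
    show "f holomorphic_on ball 0 r" using hol by (rule holomorphic_on_subset) auto
    show "continuous_on (cball 0 r) f" using cont by (rule continuous_on_subset) auto
    fix x :: complex assume "norm (0 - x) = r"
    then show "norm (f x) \<le> max_modulus f r" using norm_le_max_modulus[OF cont, of x r] by simp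
  qed fact
  then have "norm (a k) \<le> max_modulus f r / r ^ k"
    unfolding power_series_entire(2)[OF series, of k] by (simp add: norm_divide field_simps)
  then show ?thesis using \<open>r > 0\<close> by (simp add: field_simps)
qed

lemma power_series_nonzero_coeff_beyond:
  fixes f :: "complex \<Rightarrow> complex" and a :: "nat \<Rightarrow> complex"
  assumes series: "\<And>z. (\<lambda>k. a k * z ^ k) sums f z"
    and transcendental: "\<not> (\<exists>p. \<forall>z. f z = poly p z)"
  shows "\<exists>k>N. a k \<noteq> 0"
proof (rule ccontr)
  assume "\<not> (\<exists>k>N. a k \<noteq> 0)"
  then have "(\<lambda>k. a k * w ^ k) sums (\<Sum>k\<le>N. a k * w ^ k)" for w
    by (intro sums_finite) auto
  then have "f w = (\<Sum>k\<le>N. a k * w ^ k)" for w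
    using series sums_unique2 by blast
  then have "f w = poly (\<Sum>k\<le>N. monom (a k) k) w" for w
    by (simp add: poly_sum poly_monom)
  then show False using transcendental by blast
qed

lemma norm_div_power_le_on_annulus:
  fixes f :: "complex \<Rightarrow> complex"
  assumes hol: "f holomorphic_on UNIV" and "0 < r\<^sub>1" "r\<^sub>1 \<le> r\<^sub>2"
    and inner: "max_modulus f r\<^sub>1 / r\<^sub>1 ^ n = m" and outer: "max_modulus f r\<^sub>2 / r\<^sub>2 ^ n = m"
    and w: "r\<^sub>1 \<le> norm w" "norm w \<le> r\<^sub>2"
  shows "norm (f w / w ^ n) \<le> m"
proof -
  have cont: "continuous_on UNIV f" using hol by (rule holomorphic_on_imp_continuous_on)
  define A where "A = cball (0::complex) r\<^sub>2 - ball 0 r\<^sub>1"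
  have closed: "closure A = A" unfolding A_def by (intro closure_closed) auto
  have interior: "interior A = ball 0 r\<^sub>2 - cball 0 r\<^sub>1"
    unfolding A_def using \<open>0 < r\<^sub>1\<close> by (simp add: interior_diff closure_ball)
  have nonzero: "z \<noteq> 0" if "z \<in> A" for z using that \<open>0 < r\<^sub>1\<close> by (auto simp: A_def)
  show ?thesis
  proof (rule maximum_modulus_frontier[where f = "\<lambda>z. f z / z ^ n" and S = A])
    show "(\<lambda>z. f z / z ^ n) holomorphic_on interior A" unfolding interior
      by (intro holomorphic_intros holomorphic_on_subset[OF hol]) (use \<open>0 < r\<^sub>1\<close> in auto)
    show "continuous_on (closure A) (\<lambda>z. f z / z ^ n)" unfolding closed
      by (intro continuous_intros continuous_on_subset[OF cont]) (use nonzero in auto)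
    show "bounded A" unfolding A_def by (rule bounded_subset[OF bounded_cball]) auto
    show "w \<in> A" using w by (simp add: A_def)
  next
    fix z assume "z \<in> frontier A"
    then have "norm z = r\<^sub>1 \<or> norm z = r\<^sub>2"
      unfolding frontier_def closed interior by (auto simp: A_def)
    then have "max_modulus f (norm z) / norm z ^ n = m" using inner outer by auto
    have "norm (f z / z ^ n) = norm (f z) / norm z ^ n" by (simp add: norm_divide norm_power)
    also have "\<dots> \<le> max_modulus f (norm z) / norm z ^ n"
      by (intro divide_right_mono norm_le_max_modulus[OF cont]) auto
    finally show "norm (f z / z ^ n) \<le> m"
      using \<open>max_modulus f (norm z) / norm z ^ n = m\<close> by simp
  qed
qed

lemma monomial_if_div_power_constant_on:
  fixes f :: "complex \<Rightarrow> complex"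
  assumes hol: "f holomorphic_on UNIV" and "open U" "U \<noteq> {}" "0 \<notin> U"
    and const: "\<And>z. z \<in> U \<Longrightarrow> f z / z ^ n = c"
  shows "f z = c * z ^ n"
proof (rule analytic_continuation_open[where s = U and s' = UNIV and g = "\<lambda>z. c * z ^ n"])
  show "\<And>w. w \<in> U \<Longrightarrow> f w = c * w ^ n"
    using const \<open>0 \<notin> U\<close> by (metis divide_eq_eq power_eq_0_iff)
  show "(\<lambda>z. c * z ^ n) holomorphic_on UNIV" by (intro holomorphic_intros)
qed (use assms in auto)

text \<open>
  By minimality of \<open>r\<^sub>1\<close>, the bound \<open>m\<close> of \<open>|f(z) / z^n|\<close> on the annulus is attained on
  the middle circle, so the maximum modulus principle applies there.
\<close>
lemma two_radius_minimizers_imp_monomial: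
  fixes f :: "complex \<Rightarrow> complex"
  assumes hol: "f holomorphic_on UNIV"
    and min\<^sub>1: "is_radius_minimizer (max_modulus f) n r\<^sub>1"
    and min\<^sub>2: "is_radius_minimizer (max_modulus f) n r\<^sub>2" and "r\<^sub>1 < r\<^sub>2"
  shows "\<exists>c. \<forall>z. f z = c * z ^ n"
proof -
  have cont: "continuous_on UNIV f" using hol by (rule holomorphic_on_imp_continuous_on)
  have "0 < r\<^sub>1" using min\<^sub>1 by (simp add: is_radius_minimizer_def)
  define m where "m = max_modulus f r\<^sub>1 / r\<^sub>1 ^ n"
  have outer: "max_modulus f r\<^sub>2 / r\<^sub>2 ^ n = m"
    using min\<^sub>1 min\<^sub>2 unfolding m_def is_radius_minimizer_def by (meson order_antisym)
  have bound: "norm (f w / w ^ n) \<le> m" if "r\<^sub>1 \<le> norm w" "norm w \<le> r\<^sub>2" for w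
    using norm_div_power_le_on_annulus[OF hol \<open>0 < r\<^sub>1\<close> _ m_def[symmetric] outer] that \<open>r\<^sub>1 < r\<^sub>2\<close>
    by simp
  define s where "s = (r\<^sub>1 + r\<^sub>2) / 2"
  obtain z\<^sub>0 where z\<^sub>0: "norm z\<^sub>0 = s" "norm (f z\<^sub>0) = max_modulus f s"
    using max_modulus_attained[OF cont, of s] \<open>0 < r\<^sub>1\<close> \<open>r\<^sub>1 < r\<^sub>2\<close> by (auto simp: s_def)
  have "m \<le> max_modulus f s / s ^ n"
    using min\<^sub>1 \<open>0 < r\<^sub>1\<close> \<open>r\<^sub>1 < r\<^sub>2\<close> by (simp add: is_radius_minimizer_def m_def s_def)
  also have "\<dots> = norm (f z\<^sub>0 / z\<^sub>0 ^ n)" using z\<^sub>0 by (simp add: norm_divide norm_power)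
  finally have max_at_z\<^sub>0: "m \<le> norm (f z\<^sub>0 / z\<^sub>0 ^ n)" .
  define U where "U = ball z\<^sub>0 ((r\<^sub>2 - r\<^sub>1) / 2)"
  have U: "r\<^sub>1 \<le> norm w \<and> norm w \<le> r\<^sub>2" if "w \<in> U" for w
  proof -
    have "\<bar>norm w - s\<bar> < (r\<^sub>2 - r\<^sub>1) / 2"
      using that norm_triangle_ineq3[of w z\<^sub>0] z\<^sub>0(1)
      by (simp add: U_def dist_norm norm_minus_commute)
    then show ?thesis by (auto simp: s_def abs_less_iff field_simps)
  qed
  have "z\<^sub>0 \<in> U" unfolding U_def using \<open>r\<^sub>1 < r\<^sub>2\<close> by auto
  have "(\<lambda>z. f z / z ^ n) constant_on U"
  proof (rule maximum_modulus_principle[where f = "\<lambda>z. f z / z ^ n" and S = U and U = U])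
    show "(\<lambda>z. f z / z ^ n) holomorphic_on U"
      by (intro holomorphic_intros holomorphic_on_subset[OF hol])
         (use U \<open>0 < r\<^sub>1\<close> in fastforce)+
    show "\<And>z. z \<in> U \<Longrightarrow> norm (f z / z ^ n) \<le> norm (f z\<^sub>0 / z\<^sub>0 ^ n)"
      using bound U max_at_z\<^sub>0 by fastforce
  qed (use \<open>z\<^sub>0 \<in> U\<close> in \<open>auto simp: U_def\<close>)
  then obtain c where "\<And>z. z \<in> U \<Longrightarrow> f z / z ^ n = c" unfolding constant_on_def by blast
  moreover have "open U" "U \<noteq> {}" "0 \<notin> U"
    using U[of 0] \<open>0 < r\<^sub>1\<close> \<open>z\<^sub>0 \<in> U\<close> by (auto simp: U_def)
  ultimately show ?thesis using monomial_if_div_power_constant_on[OF hol] by blast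
qed

lemma radius_minimizer_unique:
  fixes f :: "complex \<Rightarrow> complex"
  assumes "f holomorphic_on UNIV" and not_monomial: "\<not> (\<exists>c. \<forall>z. f z = c * z ^ n)"
    and "is_radius_minimizer (max_modulus f) n r\<^sub>1" "is_radius_minimizer (max_modulus f) n r\<^sub>2"
  shows "r\<^sub>1 = r\<^sub>2"
  using two_radius_minimizers_imp_monomial[OF assms(1)] assms(3,4) not_monomial
  by (cases r\<^sub>1 r\<^sub>2 rule: linorder_cases) blast+

lemma r_diamond_is_radius_minimizer:
  fixes f :: "complex \<Rightarrow> complex" and a :: "nat \<Rightarrow> complex"
  assumes series: "\<And>z. (\<lambda>k. a k * z ^ k) sums f z"
    and transcendental: "\<not> (\<exists>p. \<forall>z. f z = poly p z)"
    and "a j \<noteq> 0" "j < n"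
  shows "is_radius_minimizer (max_modulus f) n (r_diamond f n)"
proof -
  have hol: "f holomorphic_on UNIV" using power_series_entire[OF series] by simp
  have cont: "continuous_on {0<..} (max_modulus f)"
    using continuous_on_max_modulus holomorphic_on_imp_continuous_on[OF hol] by blast
  have coeff_bound: "\<And>k r. r > 0 \<Longrightarrow> norm (a k) * r ^ k \<le> max_modulus f r"
    using norm_coeff_mult_power_le_max_modulus[OF series] by blast
  obtain k where "n < k" "norm (a k) > 0"
    using power_series_nonzero_coeff_beyond[OF series transcendental] by auto
  moreover have "norm (a j) > 0" using \<open>a j \<noteq> 0\<close> by simp
  ultimately have "\<exists>r. is_radius_minimizer (max_modulus f) n r"
    using radius_minimizer_exists[OF cont coeff_bound _ \<open>j < n\<close> coeff_bound] by blast
  moreover have "\<not> (\<exists>c. \<forall>z. f z = c * z ^ n)"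
    using transcendental by (auto simp: poly_monom[symmetric])
  ultimately have "\<exists>!r. is_radius_minimizer (max_modulus f) n r"
    using radius_minimizer_unique[OF hol] by blast
  then show ?thesis unfolding r_diamond_eq_The by (rule theI')
qed

theorem theorem7p3:
  fixes f :: "complex \<Rightarrow> complex" and a :: "nat \<Rightarrow> complex"
  assumes series: "\<And>z. (\<lambda>k. a k * z ^ k) sums f z"
    and transcendental: "\<not> (\<exists>p. \<forall>z. f z = poly p z)"
  shows "(\<forall>n. n > (LEAST k. a k \<noteq> 0) \<longrightarrow> r_diamond f n \<le> r_diamond f (Suc n))
         \<and> filterlim (r_diamond f) at_top sequentially"
proof -
  define n\<^sub>0 where "n\<^sub>0 = (LEAST k. a k \<noteq> 0)"
  have "\<exists>k. a k \<noteq> 0" using power_series_nonzero_coeff_beyond[OF series transcendental] by blast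
  then have "norm (a n\<^sub>0) > 0" unfolding n\<^sub>0_def using LeastI_ex by simp
  have coeff_bound: "\<And>r. r > 0 \<Longrightarrow> norm (a n\<^sub>0) * r ^ n\<^sub>0 \<le> max_modulus f r"
    using norm_coeff_mult_power_le_max_modulus[OF series] by blast
  have min: "is_radius_minimizer (max_modulus f) n (r_diamond f n)" if "n \<ge> Suc n\<^sub>0" for n
    using r_diamond_is_radius_minimizer[OF series transcendental, where j = n\<^sub>0]
      \<open>norm (a n\<^sub>0) > 0\<close> that by simp
  have "max_modulus f r > 0" if "r > 0" for r
    using less_le_trans[OF mult_pos_pos[OF \<open>norm (a n\<^sub>0) > 0\<close> zero_less_power[OF that]]]
      coeff_bound[OF that] .
  note mono = radius_minimizers_mono[OF this min]
  have "r_diamond f n \<le> r_diamond f (Suc n)" if "n > n\<^sub>0" for n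
    using mono[where m = n and n = "Suc n"] that by simp
  moreover have "filterlim (r_diamond f) at_top sequentially"
    using radius_minimizers_tendsto_infinity[OF coeff_bound \<open>norm (a n\<^sub>0) > 0\<close> min] .
  ultimately show ?thesis unfolding n\<^sub>0_def by blast
qed

end
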